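(* Let $\ast$ be a continuous $t$-norm and let $\{(X_n,M_n,\ast)\}_{n\in\mathbb N}$ be a sequence of nonempty compact fuzzy metric spaces such that: (1) $\ast$ satisfies (TN1) and each $(M_n,\ast)$ is stationary; (2) there is a constant $C>0$ with $C\le\mathrm{diam}(X_n)$ for all $n$; (3) for every $0<\varepsilon<1$ there is $N(\varepsilon)\in\mathbb N$ with $\mathrm{Cov}(X_n,\varepsilon)\le N(\varepsilon)$ for all $n$. Then for every $0<\varepsilon<1$ there is a subsequence $\{X_{n_k}\}_k$ with $M_{GH}(X_{n_j},X_{n_k},t)>(1-\varepsilon)\ast(1-\varepsilon)$ for all $j,k\in\mathbb N$ and all $t>0$; consequently $\{(X_n,M_n,\ast)\}_n$ has a Cauchy subsequence with respect to $M_{GH}$.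
   Context: A continuous $t$-norm is a binary operation $\ast:[0,1]\times[0,1]\to[0,1]$ which is associative, commutative, continuous, satisfies $a\ast 1=a$, and is monotone. Property (TN1): $a-a\ast b\ge a\ast(1-b)$ for all $a,b\in[0,1]$. A fuzzy metric space $(X,M,\ast)$: $M:X\times X\times[0,\infty)\to[0,1]$ with, for all $x,y,z$ and $t,s>0$: (KM1) $M(x,y,0)=0$; (KM2) $M(x,y,t)=1$ for all $t>0$ iff $x=y$; (KM3) symmetry; (KM4) $M(x,y,t)\ast M(y,z,s)\le M(x,z,t+s)$; (KM5) $M(x,y,\cdot)$ left continuous on $[0,\infty)$. Non-Archimedean: $M(x,z,\max\{t,s\})\ge M(x,y,t)\ast M(y,z,s)$. $(M,\ast)$ is stationary if for each $x,y$ the function $t\mapsto M(x,y,t)$ is constant on $t>0$ (then we write $M(x,y)$); stationary fuzzy metrics are non-Archimedean. Balls $B(x,\varepsilon,t)=\{y:M(x,y,t)>1-\varepsilon\}$ generate the topology; "compact" refers to it. For stationary $M$, $\mathrm{diam}(X)=\inf\{M(x,y):x,y\in X\}$ and $\mathrm{Cov}(X,\varepsilon)$ is the minimal cardinality of $C\subseteq X$ with $X=\bigcup_{c\in C}\{y: M(c,y)>1-\varepsilon\}$. $H_M(A,B,t)=\min\{\inf_{a\in A}\sup_{b\in B}M(a,b,t),\ \inf_{b\in B}\sup_{a\in A}M(a,b,t)\}$. A fuzzy metric on the disjoint union $X\sqcup Y$ is admissible if it restricts to the given ones; $M_{GH}(X,Y,t)=\sup\{H_M(X,Y,t): M$ admissible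 non-Archimedean fuzzy metric on $X\sqcup Y$ with $t$-norm $\ast\}$. A sequence is Cauchy w.r.t. $M_{GH}$ if for every $t>0$, $0<\varepsilon<1$ there is $n_0$ with $M_{GH}(X_n,X_m,t)>1-\varepsilon$ for all $n,m\ge n_0$. *)

theory Defs
  imports "HOL-Analysis.Analysis"
begin

definition tnorm :: "(real \<Rightarrow> real \<Rightarrow> real) \<Rightarrow> bool" where
  "tnorm T \<longleftrightarrow>
     (\<forall>a\<in>{0..1}. \<forall>b\<in>{0..1}. T a b \<in> {0..1}) \<and>
     (\<forall>a\<in>{0..1}. \<forall>b\<in>{0..1}. \<forall>c\<in>{0..1}. T (T a b) c = T a (T b c)) \<and>
     (\<forall>a\<in>{0..1}. \<forall>b\<in>{0..1}. T a b = T b a) \<and>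
     (\<forall>a\<in>{0..1}. T a 1 = a) \<and>
     (\<forall>a\<in>{0..1}. \<forall>b\<in>{0..1}. \<forall>c\<in>{0..1}. \<forall>d\<in>{0..1}.
        a \<le> c \<longrightarrow> b \<le> d \<longrightarrow> T a b \<le> T c d)"

definition continuous_tnorm :: "(real \<Rightarrow> real \<Rightarrow> real) \<Rightarrow> bool" where
  "continuous_tnorm T \<longleftrightarrow> tnorm T \<and>
     continuous_on ({0..1} \<times> {0..1}) (\<lambda>p. T (fst p) (snd p))"

definition TN1 :: "(real \<Rightarrow> real \<Rightarrow> real) \<Rightarrow> bool" where
  "TN1 T \<longleftrightarrow> (\<forall>a\<in>{0..1}. \<forall>b\<in>{0..1}. a - T a b \<ge> T a (1 - b))"

text \<open>A fuzzy metric on the carrier set X; M is only meaningful for t \<ge> 0.\<close>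
definition fuzzy_metric ::
  "'a set \<Rightarrow> ('a \<Rightarrow> 'a \<Rightarrow> real \<Rightarrow> real) \<Rightarrow> (real \<Rightarrow> real \<Rightarrow> real) \<Rightarrow> bool" where
  "fuzzy_metric X M T \<longleftrightarrow>
     (\<forall>x\<in>X. \<forall>y\<in>X. \<forall>t\<ge>0. M x y t \<in> {0..1}) \<and>
     (\<forall>x\<in>X. \<forall>y\<in>X. M x y 0 = 0) \<and>
     (\<forall>x\<in>X. \<forall>y\<in>X. (\<forall>t>0. M x y t = 1) \<longleftrightarrow> x = y) \<and>
     (\<forall>x\<in>X. \<forall>y\<in>X. \<forall>t\<ge>0. M x y t = M y x t) \<and>
     (\<forall>x\<in>X. \<forall>y\<in>X. \<forall>z\<in>X. \<forall>t>0. \<forall>s>0. T (M x y t) (M y z s) \<le> M x z (t + s)) \<and>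
     (\<forall>x\<in>X. \<forall>y\<in>X. \<forall>t>0. (M x y \<longlongrightarrow> M x y t) (at_left t))"

definition non_archimedean ::
  "'a set \<Rightarrow> ('a \<Rightarrow> 'a \<Rightarrow> real \<Rightarrow> real) \<Rightarrow> (real \<Rightarrow> real \<Rightarrow> real) \<Rightarrow> bool" where
  "non_archimedean X M T \<longleftrightarrow>
     (\<forall>x\<in>X. \<forall>y\<in>X. \<forall>z\<in>X. \<forall>t>0. \<forall>s>0. M x z (max t s) \<ge> T (M x y t) (M y z s))"

definition stationary :: "'a set \<Rightarrow> ('a \<Rightarrow> 'a \<Rightarrow> real \<Rightarrow> real) \<Rightarrow> bool" where
  "stationary X M \<longleftrightarrow> (\<forall>x\<in>X. \<forall>y\<in>X. \<forall>t>0. \<forall>s>0. M x y t = M x y s)"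

definition fball :: "'a set \<Rightarrow> ('a \<Rightarrow> 'a \<Rightarrow> real \<Rightarrow> real) \<Rightarrow> 'a \<Rightarrow> real \<Rightarrow> real \<Rightarrow> 'a set" where
  "fball X M x \<epsilon> t = {y\<in>X. M x y t > 1 - \<epsilon>}"

definition fuzzy_open :: "'a set \<Rightarrow> ('a \<Rightarrow> 'a \<Rightarrow> real \<Rightarrow> real) \<Rightarrow> 'a set \<Rightarrow> bool" where
  "fuzzy_open X M U \<longleftrightarrow> U \<subseteq> X \<and>
     (\<forall>x\<in>U. \<exists>\<epsilon>. 0 < \<epsilon> \<and> \<epsilon> < 1 \<and> (\<exists>t>0. fball X M x \<epsilon> t \<subseteq> U))"

definition fuzzy_compact :: "'a set \<Rightarrow> ('a \<Rightarrow> 'a \<Rightarrow> real \<Rightarrow> real) \<Rightarrow> bool" where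
  "fuzzy_compact X M \<longleftrightarrow>
     (\<forall>\<U>. (\<forall>U\<in>\<U>. fuzzy_open X M U) \<and> X \<subseteq> \<Union>\<U> \<longrightarrow>
        (\<exists>\<F>\<subseteq>\<U>. finite \<F> \<and> X \<subseteq> \<Union>\<F>))"

text \<open>For stationary M we write M(x,y) = M x y 1 (any t > 0 gives the same value).\<close>
definition fdiam :: "'a set \<Rightarrow> ('a \<Rightarrow> 'a \<Rightarrow> real \<Rightarrow> real) \<Rightarrow> real" where
  "fdiam X M = Inf {M x y 1 | x y. x \<in> X \<and> y \<in> X}"

definition fCov :: "'a set \<Rightarrow> ('a \<Rightarrow> 'a \<Rightarrow> real \<Rightarrow> real) \<Rightarrow> real \<Rightarrow> nat" where
  "fCov X M \<epsilon> = (LEAST n. \<exists>C\<subseteq>X. finite C \<and> card C = n \<and>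
                      X = (\<Union>c\<in>C. {y\<in>X. M c y 1 > 1 - \<epsilon>}))"

definition H_M :: "('b \<Rightarrow> 'b \<Rightarrow> real \<Rightarrow> real) \<Rightarrow> 'b set \<Rightarrow> 'b set \<Rightarrow> real \<Rightarrow> real" where
  "H_M M A B t = min (INF a\<in>A. SUP b\<in>B. M a b t) (INF b\<in>B. SUP a\<in>A. M a b t)"

text \<open>Disjoint union X \<squnion> Y realised inside the sum type 'a + 'a.\<close>
definition admissible ::
  "(real \<Rightarrow> real \<Rightarrow> real) \<Rightarrow> 'a set \<Rightarrow> ('a \<Rightarrow> 'a \<Rightarrow> real \<Rightarrow> real) \<Rightarrow>
   'a set \<Rightarrow> ('a \<Rightarrow> 'a \<Rightarrow> real \<Rightarrow> real) \<Rightarrow> ('a + 'a \<Rightarrow> 'a + 'a \<Rightarrow> real \<Rightarrow> real) \<Rightarrow> bool" where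
  "admissible T X MX Y MY M \<longleftrightarrow>
     fuzzy_metric (Inl ` X \<union> Inr ` Y) M T \<and>
     non_archimedean (Inl ` X \<union> Inr ` Y) M T \<and>
     (\<forall>x\<in>X. \<forall>x'\<in>X. \<forall>t\<ge>0. M (Inl x) (Inl x') t = MX x x' t) \<and>
     (\<forall>y\<in>Y. \<forall>y'\<in>Y. \<forall>t\<ge>0. M (Inr y) (Inr y') t = MY y y' t)"

definition M_GH ::
  "(real \<Rightarrow> real \<Rightarrow> real) \<Rightarrow> 'a set \<Rightarrow> ('a \<Rightarrow> 'a \<Rightarrow> real \<Rightarrow> real) \<Rightarrow>
   'a set \<Rightarrow> ('a \<Rightarrow> 'a \<Rightarrow> real \<Rightarrow> real) \<Rightarrow> real \<Rightarrow> real" where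
  "M_GH T X MX Y MY t =
     Sup {H_M M (Inl ` X) (Inr ` Y) t | M. admissible T X MX Y MY M}"

definition GH_Cauchy ::
  "(real \<Rightarrow> real \<Rightarrow> real) \<Rightarrow> (nat \<Rightarrow> 'a set) \<Rightarrow> (nat \<Rightarrow> 'a \<Rightarrow> 'a \<Rightarrow> real \<Rightarrow> real) \<Rightarrow> bool" where
  "GH_Cauchy T X M \<longleftrightarrow>
     (\<forall>t>0. \<forall>\<epsilon>. 0 < \<epsilon> \<and> \<epsilon> < 1 \<longrightarrow>
        (\<exists>n0. \<forall>n\<ge>n0. \<forall>m\<ge>n0. M_GH T (X n) (M n) (X m) (M m) t > 1 - \<epsilon>))"

end

(*
  Given theta < 1, choose eps with T (1 - eps) (1 - eps) > theta and put rho = 1 - eps.  Each X n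
  has a rho-net of at most N = N(eps) points, and the N x N matrices of fuzzy distances between
  net points lie in [C, 1]; by compactness of this cube a subsequence of them converges.  Since
  (TN1) and continuity give T mu L < L for mu < 1 and L > 0, from some index on any two of
  these matrices d, d' satisfy T (T rho rho) d' <= d entrywise.  Two such spaces can then be
  glued: the fuzzy distance between x in X and y in Y is the best value, over the net indices i,
  of M x (e i) * rho * M' (e' i) y.  This is an admissible stationary fuzzy metric on the
  disjoint union in which each space lies within T rho rho of the other, so M_GH is at least
  T rho rho > theta.  A diagonal argument over theta = 1 - 1/(k+1) gives the Cauchy subsequence.
*)

theory Submission
  imports Defs "HOL-Library.Diagonal_Subsequence"
begin

section \<open>Continuous t-norms\<close>

definition unit_clamp :: "real \<Rightarrow> real" where
  "unit_clamp a = max 0 (min 1 a)"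

lemma unit_clamp_id: "a \<in> {0..1} \<Longrightarrow> unit_clamp a = a"
  and unit_clamp_range: "unit_clamp a \<in> {0..1}"
  and unit_clamp_mono: "a \<le> b \<Longrightarrow> unit_clamp a \<le> unit_clamp b"
  by (auto simp: unit_clamp_def)

locale t_norm =
  fixes T :: "real \<Rightarrow> real \<Rightarrow> real"
  assumes tnorm: "tnorm T"
begin

lemma T_range: "a \<in> {0..1} \<Longrightarrow> b \<in> {0..1} \<Longrightarrow> T a b \<in> {0..1}"
  and T_assoc: "a \<in> {0..1} \<Longrightarrow> b \<in> {0..1} \<Longrightarrow> c \<in> {0..1} \<Longrightarrow> T (T a b) c = T a (T b c)"
  and T_comm: "a \<in> {0..1} \<Longrightarrow> b \<in> {0..1} \<Longrightarrow> T a b = T b a"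
  and T_one: "a \<in> {0..1} \<Longrightarrow> T a 1 = a"
  and T_mono: "a \<in> {0..1} \<Longrightarrow> b \<in> {0..1} \<Longrightarrow> c \<in> {0..1} \<Longrightarrow> d \<in> {0..1} \<Longrightarrow>
     a \<le> c \<Longrightarrow> b \<le> d \<Longrightarrow> T a b \<le> T c d"
  using tnorm unfolding tnorm_def by blast+

lemma T_le_left: "a \<in> {0..1} \<Longrightarrow> b \<in> {0..1} \<Longrightarrow> T a b \<le> a"
  using T_mono[of a b a 1] T_one[of a] by auto

lemma T_le_right: "a \<in> {0..1} \<Longrightarrow> b \<in> {0..1} \<Longrightarrow> T a b \<le> b"
  using T_le_left[of b a] T_comm[of a b] by simp

lemma T_zero: "a \<in> {0..1} \<Longrightarrow> T a 0 = 0"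
  using T_le_right[of a 0] T_range[of a 0] by auto

text \<open>Extending T to all of \<real> by clamping its arguments makes it an abelian semigroup
  without side conditions, so that associativity and commutativity can be used by the simplifier.\<close>

definition Tc :: "real \<Rightarrow> real \<Rightarrow> real" where
  "Tc a b = T (unit_clamp a) (unit_clamp b)"

lemma Tc_eq_T: "a \<in> {0..1} \<Longrightarrow> b \<in> {0..1} \<Longrightarrow> Tc a b = T a b"
  by (simp add: Tc_def unit_clamp_id)

lemma Tc_range: "Tc a b \<in> {0..1}"
  unfolding Tc_def by (rule T_range[OF unit_clamp_range unit_clamp_range])

lemma Tc_mono: "a \<le> c \<Longrightarrow> b \<le> d \<Longrightarrow> Tc a b \<le> Tc c d"
  unfolding Tc_def by (intro T_mono unit_clamp_range unit_clamp_mono)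

lemma Tc_le_left: "a \<in> {0..1} \<Longrightarrow> Tc a b \<le> a"
  unfolding Tc_def using T_le_left[OF unit_clamp_range unit_clamp_range, of a b] unit_clamp_id[of a] by simp

lemma Tc_le_right: "b \<in> {0..1} \<Longrightarrow> Tc a b \<le> b"
  unfolding Tc_def using T_le_right[OF unit_clamp_range unit_clamp_range, of a b] unit_clamp_id[of b] by simp

sublocale Tc: abel_semigroup Tc
proof
  show "Tc (Tc a b) c = Tc a (Tc b c)" for a b c
    using T_assoc[OF unit_clamp_range unit_clamp_range unit_clamp_range, of a b c]
    unfolding Tc_def by (simp only: unit_clamp_id[OF T_range[OF unit_clamp_range unit_clamp_range]])
  show "Tc a b = Tc b a" for a b
    unfolding Tc_def by (rule T_comm[OF unit_clamp_range unit_clamp_range])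
qed

lemma Tc_one: "a \<in> {0..1} \<Longrightarrow> Tc a 1 = a"
  using Tc_eq_T[of a 1] T_one[of a] by simp

end

locale continuous_t_norm = t_norm +
  assumes continuous: "continuous_on ({0..1} \<times> {0..1}) (\<lambda>p. T (fst p) (snd p))"

lemma continuous_t_norm_iff: "continuous_t_norm T \<longleftrightarrow> continuous_tnorm T"
  unfolding continuous_t_norm_def continuous_t_norm_axioms_def t_norm_def continuous_tnorm_def ..

context continuous_t_norm
begin

lemma continuous_on_T_compose:
  assumes "continuous_on {0..1} g" "g ` {0..1} \<subseteq> {0..1}"
    and "continuous_on {0..1} h" "h ` {0..1} \<subseteq> {0..1}"
  shows "continuous_on {0..1::real} (\<lambda>s. T (g s) (h s))"
proof -
  have "continuous_on {0..1} (\<lambda>s. (g s, h s))"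
    by (intro continuous_intros assms)
  moreover have "(\<lambda>s. (g s, h s)) ` {0..1} \<subseteq> {0..1} \<times> {0..1}"
    using assms by auto
  ultimately show ?thesis
    using continuous_on_compose2[OF continuous] by fastforce
qed

lemma continuous_on_T_left: "b \<in> {0..1} \<Longrightarrow> continuous_on {0..1} (\<lambda>a. T a b)"
  and continuous_on_T_right: "a \<in> {0..1} \<Longrightarrow> continuous_on {0..1} (T a)"
  and continuous_on_T_diag: "continuous_on {0..1} (\<lambda>a. T a a)"
  by (auto intro!: continuous_on_T_compose continuous_intros)

lemma exists_T_diag_gt:
  assumes "\<theta> < 1"
  shows "\<exists>\<epsilon>. 0 < \<epsilon> \<and> \<epsilon> < 1 \<and> \<theta> < T (1 - \<epsilon>) (1 - \<epsilon>)"
proof -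
  obtain \<delta> where \<delta>: "\<delta> > 0" "\<And>a. a \<in> {0..1} \<Longrightarrow> dist a 1 < \<delta> \<Longrightarrow> dist (T a a) (T 1 1) < 1 - \<theta>"
    using continuous_on_T_diag assms unfolding continuous_on_iff by (metis atLeastAtMost_iff diff_gt_0_iff_gt order_refl zero_le_one)
  define \<epsilon> where "\<epsilon> = min (\<delta> / 2) (1 / 2)"
  have "T 1 1 = 1"
    using T_one[of 1] by simp
  moreover have "0 < \<epsilon>" "\<epsilon> < 1" "\<epsilon> < \<delta>"
    using \<delta>(1) unfolding \<epsilon>_def by auto
  ultimately show ?thesis
    using \<delta>(2)[of "1 - \<epsilon>"] by (auto simp: dist_real_def)
qed

text \<open>Under (TN1) no \<mu> < 1 fixes a positive L. Otherwise the least fixing element e of L is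
  idempotent, and (TN1) gives T e (1 - e) = 0, which contradicts either monotonicity
  (if e \<le> 1 - e) or the intermediate value theorem for T e (if 1 - e < e).\<close>

lemma T_less_right:
  assumes tn1: "TN1 T" and L: "0 < L" "L \<le> 1" and \<mu>: "0 \<le> \<mu>" "\<mu> < 1"
  shows "T \<mu> L < L"
proof (rule ccontr)
  assume "\<not> T \<mu> L < L"
  with T_le_right[of \<mu> L] L \<mu> have \<mu>_fix: "T \<mu> L = L" by auto
  define F where "F = {0..1} \<inter> (\<lambda>s. T s L) -` {L}"
  have "closed F"
    unfolding F_def using L by (intro continuous_closed_preimage continuous_on_T_left) auto
  moreover have "\<mu> \<in> F" "bdd_below F"
    using \<mu>_fix \<mu> unfolding F_def by (auto intro: bdd_belowI[of _ 0])
  ultimately have "Inf F \<in> F" "Inf F \<le> \<mu>"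
    using closed_contains_Inf cInf_lower by blast+
  then obtain e where e_min: "\<And>s. s \<in> F \<Longrightarrow> e \<le> s" and e: "e \<in> {0..1}" "T e L = L" "e < 1"
    using \<mu> cInf_lower[OF _ \<open>bdd_below F\<close>] unfolding F_def by force
  have "e \<noteq> 0"
    using e(2) T_zero[of L] T_comm[of 0 L] L by auto
  have "T (T e e) L = L"
    using T_assoc[of e e L] e L by simp
  then have "e \<le> T e e"
    using e_min T_range[of e e] e unfolding F_def by simp
  then have idem: "T e e = e"
    using T_le_left[of e e] e by simp
  have zero: "T e (1 - e) = 0"
    using tn1 e idem T_range[of e "1 - e"] unfolding TN1_def by fastforce
  show False
  proof (cases "e \<le> 1 - e")
    case True
    then show False
      using T_mono[of e e e "1 - e"] idem zero e \<open>e \<noteq> 0\<close> by auto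
  next
    case False
    have "T e 0 \<le> 1 - e" "1 - e \<le> T e 1"
      using T_zero T_one e False by auto
    then obtain z where z: "z \<in> {0..1}" "T e z = 1 - e"
      using IVT'[of "T e" 0 "1 - e" 1] continuous_on_T_right[OF e(1)] by auto
    have "T e (1 - e) = T (T e e) z"
      using z T_assoc[of e e z] e by simp
    then show False
      using idem z zero e by simp
  qed
qed

lemma T_less_near:
  assumes tn1: "TN1 T" and L: "0 < L" "L \<le> 1" and \<mu>: "0 \<le> \<mu>" "\<mu> < 1"
  shows "\<exists>e>0. \<forall>u\<in>{0..1}. \<forall>v. \<bar>u - L\<bar> < e \<longrightarrow> \<bar>v - L\<bar> < e \<longrightarrow> T \<mu> u < v"
proof -
  define g where "g = (L - T \<mu> L) / 2"
  have "g > 0"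
    using T_less_right[OF assms] unfolding g_def by simp
  then obtain \<delta> where \<delta>: "\<delta> > 0" "\<And>u. u \<in> {0..1} \<Longrightarrow> \<bar>u - L\<bar> < \<delta> \<Longrightarrow> \<bar>T \<mu> u - T \<mu> L\<bar> < g"
    using continuous_on_T_right[of \<mu>] \<mu> L unfolding continuous_on_iff dist_real_def
    by (metis atLeastAtMost_iff less_eq_real_def)
  have "T \<mu> u < v" if "u \<in> {0..1}" "\<bar>u - L\<bar> < min \<delta> g" "\<bar>v - L\<bar> < min \<delta> g" for u v
  proof -
    have "T \<mu> u < T \<mu> L + g" "L - g < v"
      using \<delta>(2)[of u] that by (auto simp: abs_less_iff)
    then show ?thesis
      using g_def by (simp add: field_simps)
  qed
  then show ?thesis
    using \<delta>(1) \<open>g > 0\<close> by (intro exI[of _ "min \<delta> g"]) auto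
qed

end

section \<open>Stationary fuzzy metrics\<close>

definition stationary_extension :: "('b \<Rightarrow> 'b \<Rightarrow> real) \<Rightarrow> 'b \<Rightarrow> 'b \<Rightarrow> real \<Rightarrow> real" where
  "stationary_extension m p q t = (if 0 < t then m p q else 0)"

lemma stationary_extension_fuzzy_metric:
  assumes range: "\<And>p q. p \<in> U \<Longrightarrow> q \<in> U \<Longrightarrow> m p q \<in> {0..1}"
    and eq_1_iff: "\<And>p q. p \<in> U \<Longrightarrow> q \<in> U \<Longrightarrow> m p q = 1 \<longleftrightarrow> p = q"
    and sym: "\<And>p q. p \<in> U \<Longrightarrow> q \<in> U \<Longrightarrow> m p q = m q p"
    and triangle: "\<And>p q r. p \<in> U \<Longrightarrow> q \<in> U \<Longrightarrow> r \<in> U \<Longrightarrow> T (m p q) (m q r) \<le> m p r"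
  shows "fuzzy_metric U (stationary_extension m) T \<and> non_archimedean U (stationary_extension m) T"
proof -
  have "(stationary_extension m p q \<longlongrightarrow> stationary_extension m p q t) (at_left t)" if "0 < t" for p q t
  proof (rule tendsto_eventually)
    show "\<forall>\<^sub>F s in at_left t. stationary_extension m p q s = stationary_extension m p q t"
      using eventually_at_left_real[OF that]
      by eventually_elim (use that in \<open>simp add: stationary_extension_def\<close>)
  qed
  moreover have "T (stationary_extension m p q t) (stationary_extension m q r s)
      \<le> stationary_extension m p r u" if "p \<in> U" "q \<in> U" "r \<in> U" "0 < t" "0 < s" "0 < u" for p q r t s u
    using triangle that unfolding stationary_extension_def by simp
  ultimately show ?thesis
    using range eq_1_iff sym unfolding fuzzy_metric_def non_archimedean_def
    by (simp add: stationary_extension_def less_max_iff_disj gt_ex)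
qed

lemma fuzzy_metricD:
  assumes "fuzzy_metric X M T" and "x \<in> X" "y \<in> X"
  shows "0 \<le> t \<Longrightarrow> M x y t \<in> {0..1}"
    and "M x y 0 = 0"
    and "(\<forall>t>0. M x y t = 1) \<longleftrightarrow> x = y"
    and "0 \<le> t \<Longrightarrow> M x y t = M y x t"
    and "z \<in> X \<Longrightarrow> 0 < t \<Longrightarrow> 0 < s \<Longrightarrow> T (M x y t) (M y z s) \<le> M x z (t + s)"
  using assms unfolding fuzzy_metric_def by simp_all

locale stationary_fuzzy_metric = t_norm T for T +
  fixes X :: "'a set" and M :: "'a \<Rightarrow> 'a \<Rightarrow> real \<Rightarrow> real"
  assumes fuzzy_metric: "fuzzy_metric X M T" and stationary: "stationary X M"
begin

lemma M_stationary: "x \<in> X \<Longrightarrow> y \<in> X \<Longrightarrow> 0 < t \<Longrightarrow> M x y t = M x y 1"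
  using stationary zero_less_one unfolding stationary_def by blast

lemma M_eq_stationary_extension:
  "x \<in> X \<Longrightarrow> y \<in> X \<Longrightarrow> 0 \<le> t \<Longrightarrow> M x y t = stationary_extension (\<lambda>x y. M x y 1) x y t"
  using fuzzy_metricD(2)[OF fuzzy_metric] M_stationary[of x y t]
  unfolding stationary_extension_def by (cases "t = 0") auto

lemma M_range: "x \<in> X \<Longrightarrow> y \<in> X \<Longrightarrow> M x y 1 \<in> {0..1}"
  using fuzzy_metricD(1)[OF fuzzy_metric, of x y 1] by simp

lemma M_sym: "x \<in> X \<Longrightarrow> y \<in> X \<Longrightarrow> M x y 1 = M y x 1"
  using fuzzy_metricD(4)[OF fuzzy_metric, of x y 1] by simp

lemma M_eq_1_iff: "x \<in> X \<Longrightarrow> y \<in> X \<Longrightarrow> M x y 1 = 1 \<longleftrightarrow> x = y"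
  using fuzzy_metricD(3)[OF fuzzy_metric, of x y] M_stationary[of x y] by (metis zero_less_one)

lemma M_refl: "x \<in> X \<Longrightarrow> M x x 1 = 1"
  using M_eq_1_iff[of x x] by simp

lemma M_triangle: "x \<in> X \<Longrightarrow> y \<in> X \<Longrightarrow> z \<in> X \<Longrightarrow> Tc (M x y 1) (M y z 1) \<le> M x z 1"
  using fuzzy_metricD(5)[OF fuzzy_metric, of x y z 1 1] M_stationary[of x z 2] M_range Tc_eq_T by simp

lemma fdiam_le: "x \<in> X \<Longrightarrow> y \<in> X \<Longrightarrow> fdiam X M \<le> M x y 1"
  unfolding fdiam_def using M_range by (intro cInf_lower) (auto intro: bdd_belowI[of _ 0])

end

locale compact_stationary_fuzzy_metric = continuous_t_norm T + stationary_fuzzy_metric T X M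
  for T X M +
  assumes compact: "fuzzy_compact X M"
begin

lemma fuzzy_open_ball:
  assumes "c \<in> X"
  shows "fuzzy_open X M {y \<in> X. 1 - \<epsilon> < M c y 1}"
  unfolding fuzzy_open_def
proof (intro conjI ballI)
  fix y assume y: "y \<in> {y \<in> X. 1 - \<epsilon> < M c y 1}"
  define m where "m = M c y 1"
  have m: "m \<in> {0..1}" "1 - \<epsilon> < m"
    using y M_range assms unfolding m_def by auto
  obtain \<delta> where \<delta>: "0 < \<delta>" "\<And>v. v \<in> {0..1} \<Longrightarrow> \<bar>v - 1\<bar> < \<delta> \<Longrightarrow> \<bar>T m v - T m 1\<bar> < m - (1 - \<epsilon>)"
    using continuous_on_T_right[OF m(1)] m(2) unfolding continuous_on_iff dist_real_def
    by (metis atLeastAtMost_iff diff_gt_0_iff_gt order_refl zero_le_one)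
  have "fball X M y (min \<delta> (1/2)) 1 \<subseteq> {y \<in> X. 1 - \<epsilon> < M c y 1}"
  proof
    fix z assume "z \<in> fball X M y (min \<delta> (1/2)) 1"
    then have z: "z \<in> X" "1 - min \<delta> (1/2) < M y z 1"
      unfolding fball_def by auto
    have "M y z 1 \<in> {0..1}" "\<bar>M y z 1 - 1\<bar> < \<delta>"
      using z M_range[of y z] y by auto
    then have "1 - \<epsilon> < T m (M y z 1)"
      using \<delta>(2)[of "M y z 1"] T_one[OF m(1)] by (auto simp: abs_less_iff)
    also have "T m (M y z 1) \<le> M c z 1"
      using M_triangle[of c y z] Tc_eq_T[OF m(1) M_range[of y z]] y z assms unfolding m_def by auto
    finally show "z \<in> {y \<in> X. 1 - \<epsilon> < M c y 1}"
      using z by simp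
  qed
  then show "\<exists>\<epsilon>'>0. \<epsilon>' < 1 \<and> (\<exists>t>0. fball X M y \<epsilon>' t \<subseteq> {y \<in> X. 1 - \<epsilon> < M c y 1})"
    using \<delta>(1) by (intro exI[of _ "min \<delta> (1/2)"] conjI exI[of _ 1]) auto
qed auto

lemma finite_ball_cover:
  assumes "0 < \<epsilon>"
  shows "\<exists>C\<subseteq>X. finite C \<and> X = (\<Union>c\<in>C. {y \<in> X. 1 - \<epsilon> < M c y 1})"
proof -
  let ?B = "\<lambda>c. {y \<in> X. 1 - \<epsilon> < M c y 1}"
  have "X \<subseteq> \<Union>(?B ` X)"
    using M_refl assms by auto
  moreover have "\<forall>U\<in>?B ` X. fuzzy_open X M U"
    using fuzzy_open_ball by blast
  ultimately obtain \<F> where "\<F> \<subseteq> ?B ` X" "finite \<F>" "X \<subseteq> \<Union>\<F>"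
    using compact[unfolded fuzzy_compact_def, rule_format, of "?B ` X"] by blast
  moreover obtain C where "C \<subseteq> X" "finite C" "\<F> = ?B ` C"
    using finite_subset_image[OF \<open>finite \<F>\<close> \<open>\<F> \<subseteq> ?B ` X\<close>] by blast
  ultimately show ?thesis
    by (intro exI[of _ C]) auto
qed

text \<open>The net is indexed by \<open>{..<N}\<close> and padded with repetitions to all of \<nat>, so that
  the nets of different spaces can be compared entry by entry.\<close>

lemma net_of_fCov_le:
  assumes "0 < \<epsilon>" "X \<noteq> {}" "fCov X M \<epsilon> \<le> N"
  shows "\<exists>e::nat \<Rightarrow> 'a. (\<forall>i. e i \<in> X) \<and> (\<forall>x\<in>X. \<exists>i<N. 1 - \<epsilon> < M (e i) x 1)"
proof -
  let ?covers = "\<lambda>n. \<exists>C\<subseteq>X. finite C \<and> card C = n \<and> X = (\<Union>c\<in>C. {y \<in> X. 1 - \<epsilon> < M c y 1})"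
  obtain C0 where C0: "C0 \<subseteq> X" "finite C0" "X = (\<Union>c\<in>C0. {y \<in> X. 1 - \<epsilon> < M c y 1})"
    using finite_ball_cover[OF assms(1)] by (elim exE conjE)
  then have "?covers (card C0)"
    by (intro exI[of _ C0] conjI refl C0)
  then have "?covers (fCov X M \<epsilon>)"
    unfolding fCov_def by (rule LeastI)
  then obtain C where C: "C \<subseteq> X" "finite C" "card C = fCov X M \<epsilon>"
    and cover: "X \<subseteq> (\<Union>c\<in>C. {y \<in> X. 1 - \<epsilon> < M c y 1})"
    by (elim exE conjE equalityE) (rule that; assumption)
  obtain h where h: "bij_betw h {0..<card C} C"
    using ex_bij_betw_nat_finite[OF C(2)] by blast
  have "0 < card C"
    using C(2) cover assms(2) by (auto simp: card_gt_0_iff)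
  define e where "e i = h (if i < card C then i else 0)" for i
  have "e i \<in> C" for i
    using h \<open>0 < card C\<close> unfolding e_def bij_betw_def by auto
  moreover have "\<exists>i<N. 1 - \<epsilon> < M (e i) x 1" if x: "x \<in> X" for x
  proof -
    obtain c where "c \<in> C" "1 - \<epsilon> < M c x 1"
      using cover x by blast
    moreover obtain i where "i < card C" "c = h i"
      using h \<open>c \<in> C\<close> unfolding bij_betw_def by (metis atLeastLessThan_iff imageE)
    ultimately show ?thesis
      using C(3) assms(3) unfolding e_def by (intro exI[of _ i]) auto
  qed
  ultimately show ?thesis
    using C(1) by blast
qed

end

section \<open>Gluing two spaces along close nets\<close>

lemma H_M_le_1:
  assumes fm: "fuzzy_metric U M T" and "A \<subseteq> U" "B \<subseteq> U" "A \<noteq> {}" "B \<noteq> {}" "0 \<le> t"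
  shows "H_M M A B t \<le> 1"
proof -
  have range: "M a b t \<in> {0..1}" if "a \<in> A" "b \<in> B" for a b
    using fuzzy_metricD(1)[OF fm] that assms by blast
  obtain a0 b0 where "a0 \<in> A" "b0 \<in> B"
    using assms by blast
  have "bdd_below ((\<lambda>a. SUP b\<in>B. M a b t) ` A)"
  proof (rule bdd_belowI2)
    fix a assume "a \<in> A"
    then show "0 \<le> (SUP b\<in>B. M a b t)"
      using range \<open>b0 \<in> B\<close> by (intro cSUP_upper2[where x=b0]) (auto intro: bdd_aboveI2[of _ _ 1])
  qed
  then have "H_M M A B t \<le> (SUP b\<in>B. M a0 b t)"
    unfolding H_M_def using \<open>a0 \<in> A\<close> by (intro min.coboundedI1 cINF_lower)
  also have "\<dots> \<le> 1"
    using range \<open>a0 \<in> A\<close> \<open>B \<noteq> {}\<close> by (intro cSUP_least) auto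
  finally show ?thesis .
qed

lemma H_M_le_M_GH:
  assumes "admissible T X MX Y MY M" "X \<noteq> {}" "Y \<noteq> {}" "0 \<le> t"
  shows "H_M M (Inl ` X) (Inr ` Y) t \<le> M_GH T X MX Y MY t"
  unfolding M_GH_def
proof (rule cSup_upper)
  show "H_M M (Inl ` X) (Inr ` Y) t \<in> {H_M M (Inl ` X) (Inr ` Y) t | M. admissible T X MX Y MY M}"
    using assms(1) by blast
  show "bdd_above {H_M M (Inl ` X) (Inr ` Y) t | M. admissible T X MX Y MY M}"
    using H_M_le_1[of "Inl ` X \<union> Inr ` Y"] assms(2-4) unfolding admissible_def
    by (intro bdd_aboveI[of _ 1]) blast
qed

lemma le_INF_SUP:
  fixes f :: "'a \<Rightarrow> 'b \<Rightarrow> real"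
  assumes "A \<noteq> {}" "\<And>a. a \<in> A \<Longrightarrow> \<exists>b\<in>B. c \<le> f a b" "\<And>a b. a \<in> A \<Longrightarrow> b \<in> B \<Longrightarrow> f a b \<le> 1"
  shows "c \<le> (INF a\<in>A. SUP b\<in>B. f a b)"
proof (rule cINF_greatest[OF assms(1)])
  fix a assume "a \<in> A"
  then obtain b where "b \<in> B" "c \<le> f a b"
    using assms(2) by blast
  then show "c \<le> (SUP b\<in>B. f a b)"
    using assms(3) \<open>a \<in> A\<close> by (intro cSUP_upper2[where x=b]) (auto intro: bdd_aboveI2[of _ _ 1])
qed

locale net_gluing = t_norm T + X: stationary_fuzzy_metric T X MX + Y: stationary_fuzzy_metric T Y MY
  for T X MX Y MY +
  fixes eX eY :: "nat \<Rightarrow> 'a" and N :: nat and \<rho> :: real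
  assumes \<rho>: "0 \<le> \<rho>" "\<rho> < 1"
    and X_nonempty: "X \<noteq> {}" and Y_nonempty: "Y \<noteq> {}"
    and net_X: "\<And>i. eX i \<in> X" and net_Y: "\<And>i. eY i \<in> Y"
    and cover_X: "\<And>x. x \<in> X \<Longrightarrow> \<exists>i<N. \<rho> \<le> MX (eX i) x 1"
    and cover_Y: "\<And>y. y \<in> Y \<Longrightarrow> \<exists>i<N. \<rho> \<le> MY (eY i) y 1"
    and close_XY: "\<And>i j. i < N \<Longrightarrow> j < N \<Longrightarrow> T (T \<rho> \<rho>) (MY (eY i) (eY j) 1) \<le> MX (eX i) (eX j) 1"
    and close_YX: "\<And>i j. i < N \<Longrightarrow> j < N \<Longrightarrow> T (T \<rho> \<rho>) (MX (eX i) (eX j) 1) \<le> MY (eY i) (eY j) 1"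
begin

lemma N_pos: "0 < N"
  using X_nonempty cover_X by fastforce

lemma \<rho>_range: "\<rho> \<in> {0..1}"
  using \<rho> by simp

text \<open>The degree to which x \<in> X and y \<in> Y are close: x is close to some net point
  eX i and eY i is close to y, the factor \<rho> paying for the passage from eX i to eY i.\<close>

definition cross :: "'a \<Rightarrow> 'a \<Rightarrow> real" where
  "cross x y = Max ((\<lambda>i. Tc (MX x (eX i) 1) (Tc \<rho> (MY (eY i) y 1))) ` {..<N})"

lemma cross_ge: "i < N \<Longrightarrow> Tc (MX x (eX i) 1) (Tc \<rho> (MY (eY i) y 1)) \<le> cross x y"
  unfolding cross_def by (rule Max_ge) auto

lemma cross_attained:
  obtains i where "i < N" "cross x y = Tc (MX x (eX i) 1) (Tc \<rho> (MY (eY i) y 1))"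
proof -
  have "cross x y \<in> (\<lambda>i. Tc (MX x (eX i) 1) (Tc \<rho> (MY (eY i) y 1))) ` {..<N}"
    unfolding cross_def using N_pos by (intro Max_in) auto
  then show ?thesis
    using that by blast
qed

lemma cross_range: "cross x y \<in> {0..1}"
  by (metis cross_attained Tc_range)

lemma cross_le_\<rho>: "cross x y \<le> \<rho>"
proof -
  obtain i where "cross x y = Tc (MX x (eX i) 1) (Tc \<rho> (MY (eY i) y 1))"
    using cross_attained by blast
  also have "\<dots> \<le> Tc \<rho> (MY (eY i) y 1)"
    using Tc_range by (rule Tc_le_right)
  also have "\<dots> \<le> \<rho>"
    using \<rho>_range by (rule Tc_le_left)
  finally show ?thesis .
qed

text \<open>In \<open>cross_triangle_PQR\<close> the letters name the spaces containing the three points of the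
  triangle inequality.\<close>

lemma cross_triangle_XXY:
  assumes "x \<in> X" "x' \<in> X"
  shows "Tc (MX x x' 1) (cross x' y) \<le> cross x y"
proof -
  obtain i where i: "i < N" "cross x' y = Tc (MX x' (eX i) 1) (Tc \<rho> (MY (eY i) y 1))"
    using cross_attained by blast
  have "Tc (MX x x' 1) (cross x' y) = Tc (Tc (MX x x' 1) (MX x' (eX i) 1)) (Tc \<rho> (MY (eY i) y 1))"
    using i by (simp add: Tc.assoc)
  also have "\<dots> \<le> Tc (MX x (eX i) 1) (Tc \<rho> (MY (eY i) y 1))"
    using X.M_triangle[OF assms net_X] by (rule Tc_mono) simp
  also have "\<dots> \<le> cross x y"
    using i(1) by (rule cross_ge)
  finally show ?thesis .
qed

lemma cross_triangle_XYX:
  assumes "x \<in> X" "x' \<in> X" "y \<in> Y"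
  shows "Tc (cross x y) (cross x' y) \<le> MX x x' 1"
proof -
  obtain i where i: "i < N" "cross x y = Tc (MX x (eX i) 1) (Tc \<rho> (MY (eY i) y 1))"
    using cross_attained by blast
  obtain j where j: "j < N" "cross x' y = Tc (MX x' (eX j) 1) (Tc \<rho> (MY (eY j) y 1))"
    using cross_attained by blast
  have close: "Tc (Tc \<rho> \<rho>) (MY (eY i) (eY j) 1) \<le> MX (eX i) (eX j) 1"
    using close_XY[OF i(1) j(1)] Tc_eq_T \<rho>_range T_range Y.M_range[OF net_Y net_Y] by simp
  have "Tc (cross x y) (cross x' y)
      = Tc (MX x (eX i) 1) (Tc (Tc (Tc \<rho> \<rho>) (Tc (MY (eY i) y 1) (MY y (eY j) 1))) (MX (eX j) x' 1))"
    using i j Y.M_sym[OF net_Y assms(3), of j] X.M_sym[OF assms(2) net_X, of j]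
    by (simp add: Tc.assoc Tc.commute Tc.left_commute)
  also have "\<dots> \<le> Tc (MX x (eX i) 1) (Tc (Tc (Tc \<rho> \<rho>) (MY (eY i) (eY j) 1)) (MX (eX j) x' 1))"
    using Y.M_triangle[OF net_Y assms(3) net_Y] by (intro Tc_mono order_refl)
  also have "\<dots> \<le> Tc (MX x (eX i) 1) (Tc (MX (eX i) (eX j) 1) (MX (eX j) x' 1))"
    using close by (intro Tc_mono order_refl)
  also have "\<dots> \<le> Tc (MX x (eX i) 1) (MX (eX i) x' 1)"
    using X.M_triangle[OF net_X net_X assms(2)] by (intro Tc_mono order_refl)
  also have "\<dots> \<le> MX x x' 1"
    using X.M_triangle[OF assms(1) net_X assms(2)] .
  finally show ?thesis .
qed

lemma cross_ge_net_X:
  assumes "x \<in> X" "i < N" "\<rho> \<le> MX (eX i) x 1"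
  shows "T \<rho> \<rho> \<le> cross x (eY i)"
proof -
  have "T \<rho> \<rho> = Tc \<rho> (Tc \<rho> (MY (eY i) (eY i) 1))"
    using Y.M_refl[OF net_Y] Tc_one Tc_eq_T \<rho>_range by simp
  also have "\<dots> \<le> Tc (MX x (eX i) 1) (Tc \<rho> (MY (eY i) (eY i) 1))"
    using assms(3) X.M_sym[OF assms(1) net_X] by (intro Tc_mono) simp_all
  also have "\<dots> \<le> cross x (eY i)"
    using assms(2) by (rule cross_ge)
  finally show ?thesis .
qed

end

lemma (in net_gluing) net_gluing_swap: "net_gluing T Y MY X MX eY eX N \<rho>"
  using close_XY close_YX cover_X cover_Y net_X net_Y X_nonempty Y_nonempty \<rho>
  by unfold_locales auto

context net_gluing
begin

interpretation swap: net_gluing T Y MY X MX eY eX N \<rho>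
  by (rule net_gluing_swap)

lemma cross_swap:
  assumes "x \<in> X" "y \<in> Y"
  shows "swap.cross y x = cross x y"
  unfolding cross_def swap.cross_def
proof (intro arg_cong[where f = Max] image_cong refl)
  fix i
  show "Tc (MY y (eY i) 1) (Tc \<rho> (MX (eX i) x 1)) = Tc (MX x (eX i) 1) (Tc \<rho> (MY (eY i) y 1))"
    using X.M_sym[OF assms(1) net_X] Y.M_sym[OF assms(2) net_Y] by (simp add: Tc.assoc Tc.commute Tc.left_commute)
qed

lemma cross_triangle_XYY:
  assumes "x \<in> X" "y \<in> Y" "y' \<in> Y"
  shows "Tc (cross x y) (MY y y' 1) \<le> cross x y'"
  using swap.cross_triangle_XXY[of y' y x] assms Y.M_sym[of y y'] by (simp add: cross_swap Tc.commute)

lemma cross_triangle_YXY: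
  assumes "x \<in> X" "y \<in> Y" "y' \<in> Y"
  shows "Tc (cross x y) (cross x y') \<le> MY y y' 1"
  using swap.cross_triangle_XYX[of y y' x] assms by (simp add: cross_swap)

lemma cross_ge_net_Y:
  assumes "y \<in> Y" "i < N" "\<rho> \<le> MY (eY i) y 1"
  shows "T \<rho> \<rho> \<le> cross (eX i) y"
  using swap.cross_ge_net_X[OF assms] assms(1) net_X by (simp add: cross_swap)

definition glue_dist :: "'a + 'a \<Rightarrow> 'a + 'a \<Rightarrow> real" where
  "glue_dist p q = (case (p, q) of
     (Inl x, Inl x') \<Rightarrow> MX x x' 1
   | (Inr y, Inr y') \<Rightarrow> MY y y' 1
   | (Inl x, Inr y) \<Rightarrow> cross x y
   | (Inr y, Inl x) \<Rightarrow> cross x y)"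

lemma glue_dist_simps [simp]:
  "glue_dist (Inl x) (Inl x') = MX x x' 1" "glue_dist (Inr y) (Inr y') = MY y y' 1"
  "glue_dist (Inl x) (Inr y) = cross x y" "glue_dist (Inr y) (Inl x) = cross x y"
  by (simp_all add: glue_dist_def)

lemma glue_dist_triangle:
  assumes "p \<in> Inl ` X \<union> Inr ` Y" "q \<in> Inl ` X \<union> Inr ` Y" "r \<in> Inl ` X \<union> Inr ` Y"
  shows "Tc (glue_dist p q) (glue_dist q r) \<le> glue_dist p r"
proof -
  have triangle_YXX: "Tc (cross x y) (MX x x' 1) \<le> cross x' y" if "x \<in> X" "x' \<in> X" for x x' y
    using cross_triangle_XXY[of x' x y] X.M_sym[of x x'] that by (simp add: Tc.commute)
  have triangle_YYX: "Tc (MY y y' 1) (cross x y') \<le> cross x y" if "x \<in> X" "y \<in> Y" "y' \<in> Y" for x y y'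
    using cross_triangle_XYY[of x y' y] Y.M_sym[of y y'] that by (simp add: Tc.commute)
  note triangles = triangle_YXX triangle_YYX X.M_triangle Y.M_triangle cross_triangle_XXY cross_triangle_XYY
    cross_triangle_XYX cross_triangle_YXY
  from assms show ?thesis
    by (cases p; cases q; cases r) (simp_all add: image_iff triangles)
qed

lemma admissible_glue: "admissible T X MX Y MY (stationary_extension glue_dist)"
proof -
  let ?U = "Inl ` X \<union> Inr ` Y"
  have range: "glue_dist p q \<in> {0..1}" if "p \<in> ?U" "q \<in> ?U" for p q
    using that by (cases p; cases q) (auto simp: image_iff X.M_range Y.M_range cross_range simp del: atLeastAtMost_iff)
  have "cross x y \<noteq> 1" for x y
    using cross_le_\<rho>[of x y] \<rho> by auto
  then have "fuzzy_metric ?U (stationary_extension glue_dist) T \<and>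
      non_archimedean ?U (stationary_extension glue_dist) T"
  proof (intro stationary_extension_fuzzy_metric)
    show "glue_dist p q = 1 \<longleftrightarrow> p = q" if "p \<in> ?U" "q \<in> ?U" for p q
      using that \<open>\<And>x y. cross x y \<noteq> 1\<close>
      by (cases p; cases q) (auto simp: image_iff X.M_eq_1_iff Y.M_eq_1_iff)
    show "glue_dist p q = glue_dist q p" if "p \<in> ?U" "q \<in> ?U" for p q
      using that by (cases p; cases q) (auto simp: image_iff X.M_sym Y.M_sym)
    show "T (glue_dist p q) (glue_dist q r) \<le> glue_dist p r" if "p \<in> ?U" "q \<in> ?U" "r \<in> ?U" for p q r
      using glue_dist_triangle[OF that] Tc_eq_T[OF range range] that by metis
  qed (rule range)
  moreover have "stationary_extension glue_dist (Inl x) (Inl x') t = MX x x' t"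
    if "x \<in> X" "x' \<in> X" "0 \<le> t" for x x' t
    using X.M_eq_stationary_extension[OF that] by (simp add: stationary_extension_def)
  moreover have "stationary_extension glue_dist (Inr y) (Inr y') t = MY y y' t"
    if "y \<in> Y" "y' \<in> Y" "0 \<le> t" for y y' t
    using Y.M_eq_stationary_extension[OF that] by (simp add: stationary_extension_def)
  ultimately show ?thesis
    unfolding admissible_def by blast
qed

lemma H_M_glue_ge:
  assumes "0 < t"
  shows "T \<rho> \<rho> \<le> H_M (stationary_extension glue_dist) (Inl ` X) (Inr ` Y) t"
  unfolding H_M_def
proof (intro min.boundedI le_INF_SUP)
  show "\<exists>q\<in>Inr ` Y. T \<rho> \<rho> \<le> stationary_extension glue_dist p q t" if p: "p \<in> Inl ` X" for p
  proof -
    obtain x where x: "x \<in> X" "p = Inl x"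
      using p by blast
    then obtain i where "i < N" "\<rho> \<le> MX (eX i) x 1"
      using cover_X by blast
    then show ?thesis
      using cross_ge_net_X x net_Y assms by (intro bexI[of _ "Inr (eY i)"]) (auto simp: stationary_extension_def)
  qed
  show "\<exists>p\<in>Inl ` X. T \<rho> \<rho> \<le> stationary_extension glue_dist p q t" if q: "q \<in> Inr ` Y" for q
  proof -
    obtain y where y: "y \<in> Y" "q = Inr y"
      using q by blast
    then obtain i where "i < N" "\<rho> \<le> MY (eY i) y 1"
      using cover_Y by blast
    then show ?thesis
      using cross_ge_net_Y y net_X assms by (intro bexI[of _ "Inl (eX i)"]) (auto simp: stationary_extension_def)
  qed
qed (use X_nonempty Y_nonempty cross_range in \<open>auto simp: stationary_extension_def\<close>)

lemma M_GH_ge: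
  assumes "0 < t"
  shows "T \<rho> \<rho> \<le> M_GH T X MX Y MY t"
  using H_M_glue_ge[OF assms] H_M_le_M_GH[OF admissible_glue X_nonempty Y_nonempty less_imp_le[OF assms]]
  by (rule order_trans)

end

section \<open>GH-close subsequences\<close>

lemma convergent_subsequence_finite:
  fixes d :: "nat \<Rightarrow> 'b \<Rightarrow> real"
  assumes "finite B" and d: "\<And>n p. p \<in> B \<Longrightarrow> d n p \<in> {a..b}"
  shows "\<exists>l (r::nat \<Rightarrow> nat). strict_mono r \<and> (\<forall>p\<in>B. l p \<in> {a..b} \<and> (\<lambda>n. d (r n) p) \<longlonglongrightarrow> l p)"
proof -
  have "\<forall>\<delta>\<subseteq>B. \<exists>l r. strict_mono r \<and> (\<forall>e>0. \<forall>\<^sub>F n in sequentially. \<forall>p\<in>\<delta>. dist (d (r n) p) (l p) < e)"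
  proof (rule compact_lemma_general[where proj = "\<lambda>f p. f p" and unproj = "\<lambda>f. f"])
    show "bounded ((\<lambda>f. f p) ` range d)" if "p \<in> B" for p
      using d that by (intro bounded_subset[OF bounded_closed_interval[of a b]]) auto
  qed (use \<open>finite B\<close> in auto)
  then obtain l r where r: "strict_mono r"
    and lim: "\<And>e. 0 < e \<Longrightarrow> \<forall>\<^sub>F n in sequentially. \<forall>p\<in>B. dist (d (r n) p) (l p) < e"
    by blast
  have "(\<lambda>n. d (r n) p) \<longlonglongrightarrow> l p" if "p \<in> B" for p
  proof (rule tendstoI)
    fix e :: real assume "0 < e"
    show "\<forall>\<^sub>F n in sequentially. dist (d (r n) p) (l p) < e"
      by (rule eventually_mono[OF lim[OF \<open>0 < e\<close>]]) (use that in blast)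
  qed
  moreover have "l p \<in> {a..b}" if "p \<in> B" for p
  proof (rule Lim_in_closed_set[OF closed_atLeastAtMost _ sequentially_bot calculation[OF that]])
    show "\<forall>\<^sub>F n in sequentially. d (r n) p \<in> {a..b}"
      using d that by simp
  qed
  ultimately show ?thesis
    using r by blast
qed

context continuous_t_norm
begin

text \<open>Passing to a subsequence along which the finitely many values converge to positive limits,
  the strict inequality of \<open>T_less_near\<close> holds between any two members.\<close>

lemma uniformly_close_subsequence:
  fixes d :: "nat \<Rightarrow> 'b \<Rightarrow> real"
  assumes tn1: "TN1 T" and \<mu>: "0 \<le> \<mu>" "\<mu> < 1" and "finite B" and "0 < C"
    and d: "\<And>n p. p \<in> B \<Longrightarrow> d n p \<in> {C..1}"
  shows "\<exists>r::nat \<Rightarrow> nat. strict_mono r \<and> (\<forall>j k. \<forall>p\<in>B. T \<mu> (d (r k) p) < d (r j) p)"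
proof -
  obtain l and r :: "nat \<Rightarrow> nat" where r: "strict_mono r"
    and l: "\<And>p. p \<in> B \<Longrightarrow> l p \<in> {C..1}" and lim: "\<And>p. p \<in> B \<Longrightarrow> (\<lambda>n. d (r n) p) \<longlonglongrightarrow> l p"
    using convergent_subsequence_finite[where d = d and B = B and a = C and b = 1] \<open>finite B\<close> d
    by blast
  have "\<exists>e>0. \<forall>u\<in>{0..1}. \<forall>v. \<bar>u - l p\<bar> < e \<longrightarrow> \<bar>v - l p\<bar> < e \<longrightarrow> T \<mu> u < v" if "p \<in> B" for p
    using T_less_near[OF tn1 _ _ \<mu>, of "l p"] l[OF that] \<open>0 < C\<close> by simp
  then obtain e where e: "\<forall>p\<in>B. 0 < e p \<and>
      (\<forall>u\<in>{0..1}. \<forall>v. \<bar>u - l p\<bar> < e p \<longrightarrow> \<bar>v - l p\<bar> < e p \<longrightarrow> T \<mu> u < v)"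
    by metis
  have "\<forall>\<^sub>F n in sequentially. \<bar>d (r n) p - l p\<bar> < e p" if "p \<in> B" for p
    using tendstoD[OF lim[OF that], of "e p"] e that by (simp add: dist_real_def)
  then have "\<forall>\<^sub>F n in sequentially. \<forall>p\<in>B. \<bar>d (r n) p - l p\<bar> < e p"
    using \<open>finite B\<close> by (intro eventually_ball_finite) auto
  then obtain n0 where n0: "\<And>n p. n0 \<le> n \<Longrightarrow> p \<in> B \<Longrightarrow> \<bar>d (r n) p - l p\<bar> < e p"
    unfolding eventually_sequentially by blast
  have mono: "strict_mono (\<lambda>n. r (n + n0))"
    using r by (simp add: strict_mono_def)
  have close: "T \<mu> (d (r (k + n0)) p) < d (r (j + n0)) p" if "p \<in> B" for j k p
  proof -
    have "d (r (k + n0)) p \<in> {0..1}"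
      using d[OF that, of "r (k + n0)"] \<open>0 < C\<close> by simp
    then show ?thesis
      using e n0[of "k + n0" p] n0[of "j + n0" p] that by simp
  qed
  show ?thesis
    by (rule exI[of _ "\<lambda>n. r (n + n0)"]) (simp add: mono close)
qed

end

lemma uniform_nets:
  fixes X :: "nat \<Rightarrow> 'a set" and M :: "nat \<Rightarrow> 'a \<Rightarrow> 'a \<Rightarrow> real \<Rightarrow> real"
  assumes "\<And>n. compact_stationary_fuzzy_metric T (X n) (M n)" and "\<And>n. X n \<noteq> {}"
    and "0 < \<epsilon>" and "\<And>n. fCov (X n) (M n) \<epsilon> \<le> N"
  shows "\<exists>E. (\<forall>n i. E n i \<in> X n) \<and> (\<forall>n. \<forall>x\<in>X n. \<exists>i<N. 1 - \<epsilon> \<le> M n (E n i) x 1)"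
proof -
  have "\<exists>e. (\<forall>i. e i \<in> X n) \<and> (\<forall>x\<in>X n. \<exists>i<N. 1 - \<epsilon> \<le> M n (e i) x 1)" for n
    using compact_stationary_fuzzy_metric.net_of_fCov_le[OF assms(1) assms(3) assms(2,4)]
    by (meson less_imp_le)
  then show ?thesis
    by metis
qed

lemma M_GH_close_subsequence:
  fixes X :: "nat \<Rightarrow> 'a set" and M :: "nat \<Rightarrow> 'a \<Rightarrow> 'a \<Rightarrow> real \<Rightarrow> real"
  assumes tn: "continuous_tnorm T" and tn1: "TN1 T"
    and nonempty: "\<And>n. X n \<noteq> {}" and fm: "\<And>n. fuzzy_metric (X n) (M n) T"
    and compact: "\<And>n. fuzzy_compact (X n) (M n)" and stat: "\<And>n. stationary (X n) (M n)"
    and "0 < C" and diam: "\<And>n. C \<le> fdiam (X n) (M n)"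
    and cov: "\<And>\<epsilon>. 0 < \<epsilon> \<Longrightarrow> \<epsilon> < 1 \<Longrightarrow> \<exists>N::nat. \<forall>n. fCov (X n) (M n) \<epsilon> \<le> N"
    and "\<theta> < 1"
  shows "\<exists>r::nat \<Rightarrow> nat. strict_mono r \<and>
           (\<forall>j k t. 0 < t \<longrightarrow> \<theta> < M_GH T (X (r j)) (M (r j)) (X (r k)) (M (r k)) t)"
proof -
  interpret continuous_t_norm T
    using tn by (simp add: continuous_t_norm_iff)
  interpret X: compact_stationary_fuzzy_metric T "X n" "M n" for n
    using fm compact stat by unfold_locales auto
  obtain \<epsilon> where \<epsilon>: "0 < \<epsilon>" "\<epsilon> < 1" "\<theta> < T (1 - \<epsilon>) (1 - \<epsilon>)"
    using exists_T_diag_gt[OF \<open>\<theta> < 1\<close>] by blast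
  define \<rho> where "\<rho> = 1 - \<epsilon>"
  have \<rho>: "\<rho> \<in> {0..1}" "\<rho> < 1"
    using \<epsilon> unfolding \<rho>_def by auto
  then have \<rho>\<rho>: "0 \<le> T \<rho> \<rho>" "T \<rho> \<rho> < 1"
    using T_range[of \<rho> \<rho>] T_le_left[of \<rho> \<rho>] by auto
  obtain N where N: "\<And>n. fCov (X n) (M n) \<epsilon> \<le> N"
    using cov \<epsilon> by blast
  obtain E where E: "\<And>n i. E n i \<in> X n" and cover: "\<And>n x. x \<in> X n \<Longrightarrow> \<exists>i<N. \<rho> \<le> M n (E n i) x 1"
    using uniform_nets[where X = X and M = M, OF X.compact_stationary_fuzzy_metric_axioms nonempty \<epsilon>(1) N]
    unfolding \<rho>_def by metis
  define d where "d n = (\<lambda>(i, i'). M n (E n i) (E n i') 1)" for n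
  have "d n p \<in> {C..1}" for n p
  proof -
    obtain i i' where "p = (i, i')"
      by fastforce
    then show ?thesis
      using X.M_range[OF E E] order_trans[OF diam X.fdiam_le[OF E E]] unfolding d_def by simp
  qed
  then obtain r :: "nat \<Rightarrow> nat" where r: "strict_mono r"
    and close: "\<forall>j k. \<forall>p\<in>{..<N} \<times> {..<N}. T (T \<rho> \<rho>) (d (r k) p) < d (r j) p"
    using uniformly_close_subsequence[OF tn1 \<rho>\<rho> _ \<open>0 < C\<close>, of "{..<N} \<times> {..<N}" d] by blast
  have close': "T (T \<rho> \<rho>) (M (r k) (E (r k) i) (E (r k) i') 1) \<le> M (r j) (E (r j) i) (E (r j) i') 1"
    if "i < N" "i' < N" for j k i i'
    using close that unfolding d_def by (fastforce intro: less_imp_le)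
  have "T \<rho> \<rho> \<le> M_GH T (X (r j)) (M (r j)) (X (r k)) (M (r k)) t" if "0 < t" for j k t
  proof -
    have "net_gluing T (X (r j)) (M (r j)) (X (r k)) (M (r k)) (E (r j)) (E (r k)) N \<rho>"
      using \<rho> nonempty E cover close' by unfold_locales auto
    then show ?thesis
      using that by (rule net_gluing.M_GH_ge)
  qed
  then show ?thesis
    using r \<epsilon>(3) unfolding \<rho>_def by (meson less_le_trans)
qed

lemma Cauchy_subsequence_diagonal:
  fixes D :: "nat \<Rightarrow> nat \<Rightarrow> real \<Rightarrow> real"
  assumes "\<And>\<theta> s. \<theta> < 1 \<Longrightarrow> strict_mono s \<Longrightarrow>
      \<exists>r::nat \<Rightarrow> nat. strict_mono r \<and> (\<forall>j k t. 0 < t \<longrightarrow> \<theta> < D (s (r j)) (s (r k)) t)"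
  shows "\<exists>r::nat \<Rightarrow> nat. strict_mono r \<and>
    (\<forall>t>0. \<forall>\<epsilon>. 0 < \<epsilon> \<and> \<epsilon> < 1 \<longrightarrow> (\<exists>n0. \<forall>n\<ge>n0. \<forall>m\<ge>n0. 1 - \<epsilon> < D (r n) (r m) t))"
proof -
  define P where "P n s \<longleftrightarrow> (\<forall>j k t. 0 < t \<longrightarrow> 1 - 1 / real (Suc n) < D (s j) (s k) t)"
    for n and s :: "nat \<Rightarrow> nat"
  interpret subseqs P
    using assms unfolding P_def by unfold_locales auto
  have diag: "P n (diagseq \<circ> (+) (Suc n))" for n
    by (rule diagseq_holds) (auto simp: P_def)
  have "\<exists>n0. \<forall>n\<ge>n0. \<forall>m\<ge>n0. 1 - \<epsilon> < D (diagseq n) (diagseq m) t" if "0 < t" "0 < \<epsilon>" for t \<epsilon>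
  proof -
    obtain k where k: "1 / real (Suc k) < \<epsilon>"
      using \<open>0 < \<epsilon>\<close> by (metis inverse_eq_divide reals_Archimedean)
    have "1 - \<epsilon> < D (diagseq n) (diagseq m) t" if "Suc k \<le> n" "Suc k \<le> m" for n m
    proof -
      have "1 - 1 / real (Suc k) < D (diagseq (Suc k + (n - Suc k))) (diagseq (Suc k + (m - Suc k))) t"
        using diag[of k] \<open>0 < t\<close> by (simp add: P_def)
      then show ?thesis
        using that k by simp
    qed
    then show ?thesis
      by blast
  qed
  then show ?thesis
    using subseq_diagseq by blast
qed

theorem mainTheorem10:
  fixes T :: "real \<Rightarrow> real \<Rightarrow> real"
    and X :: "nat \<Rightarrow> 'a set"
    and M :: "nat \<Rightarrow> 'a \<Rightarrow> 'a \<Rightarrow> real \<Rightarrow> real"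
    and C :: real
  assumes tn: "continuous_tnorm T"
    and sp: "\<And>n. X n \<noteq> {} \<and> fuzzy_metric (X n) (M n) T \<and> fuzzy_compact (X n) (M n)"
    and tn1: "TN1 T"
    and stat: "\<And>n. stationary (X n) (M n)"
    and Cpos: "C > 0"
    and diam: "\<And>n. C \<le> fdiam (X n) (M n)"
    and cov: "\<And>\<epsilon>. 0 < \<epsilon> \<Longrightarrow> \<epsilon> < 1 \<Longrightarrow> \<exists>N::nat. \<forall>n. fCov (X n) (M n) \<epsilon> \<le> N"
  shows "(\<forall>\<epsilon>. 0 < \<epsilon> \<and> \<epsilon> < 1 \<longrightarrow>
            (\<exists>r::nat \<Rightarrow> nat. strict_mono r \<and>
               (\<forall>j k t. t > 0 \<longrightarrow>
                  M_GH T (X (r j)) (M (r j)) (X (r k)) (M (r k)) t > T (1 - \<epsilon>) (1 - \<epsilon>))))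
       \<and> (\<exists>r::nat \<Rightarrow> nat. strict_mono r \<and> GH_Cauchy T (X \<circ> r) (M \<circ> r))"
proof -
  interpret continuous_t_norm T
    using tn by (simp add: continuous_t_norm_iff)
  have close: "\<exists>r::nat \<Rightarrow> nat. strict_mono r \<and>
      (\<forall>j k t. 0 < t \<longrightarrow> \<theta> < M_GH T (X (s (r j))) (M (s (r j))) (X (s (r k))) (M (s (r k))) t)"
    if "\<theta> < 1" for \<theta> and s :: "nat \<Rightarrow> nat"
  proof (rule M_GH_close_subsequence[of T "X \<circ> s" "M \<circ> s", simplified])
    show "\<exists>N::nat. \<forall>n. fCov (X (s n)) (M (s n)) \<epsilon> \<le> N" if "0 < \<epsilon>" "\<epsilon> < 1" for \<epsilon>
      using cov[OF that] by blast
  qed (use tn tn1 sp stat Cpos diam that in auto)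
  have "T (1 - \<epsilon>) (1 - \<epsilon>) < 1" if "0 < \<epsilon>" "\<epsilon> < 1" for \<epsilon>
    using T_le_left[of "1 - \<epsilon>" "1 - \<epsilon>"] that by simp
  then have "\<forall>\<epsilon>. 0 < \<epsilon> \<and> \<epsilon> < 1 \<longrightarrow> (\<exists>r::nat \<Rightarrow> nat. strict_mono r \<and>
      (\<forall>j k t. t > 0 \<longrightarrow> M_GH T (X (r j)) (M (r j)) (X (r k)) (M (r k)) t > T (1 - \<epsilon>) (1 - \<epsilon>)))"
    using close[where s = id] by simp
  moreover have "\<exists>r::nat \<Rightarrow> nat. strict_mono r \<and> GH_Cauchy T (X \<circ> r) (M \<circ> r)"
    using Cauchy_subsequence_diagonal[where D = "\<lambda>n m. M_GH T (X n) (M n) (X m) (M m)"] close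
    unfolding GH_Cauchy_def by simp
  ultimately show ?thesis ..
qed

end
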